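(* A finite-dimensional complex Lie algebra $\mathfrak{g}$ admits a periodic prederivation of odd order if and only if $\mathfrak{g}$ is nilpotent of class at most two, i.e. $[\mathfrak{g},[\mathfrak{g},\mathfrak{g}]]=0$.
   Context: A linear map $P:\mathfrak{g}\to\mathfrak{g}$ is a prederivation if $P([x,[y,z]])=[P(x),[y,z]]+[x,[P(y),z]]+[x,[y,P(z)]]$ for all $x,y,z\in\mathfrak{g}$. It is periodic if $P^m=\mathrm{id}$ for some integer $m\ge 1$; its order is the smallest such $m$. *)

theory Defs
  imports "HOL-Analysis.Analysis"
begin

definition lie_algebra :: "(complex \<Rightarrow> 'a::ab_group_add \<Rightarrow> 'a) \<Rightarrow> ('a \<Rightarrow> 'a \<Rightarrow> 'a) \<Rightarrow> bool" where
  "lie_algebra sc br \<longleftrightarrow>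
     vector_space sc \<and>
     (\<forall>x. Vector_Spaces.linear sc sc (br x)) \<and>
     (\<forall>y. Vector_Spaces.linear sc sc (\<lambda>x. br x y)) \<and>
     (\<forall>x. br x x = 0) \<and>
     (\<forall>x y z. br x (br y z) + br y (br z x) + br z (br x y) = 0)"

definition prederivation :: "(complex \<Rightarrow> 'a::ab_group_add \<Rightarrow> 'a) \<Rightarrow> ('a \<Rightarrow> 'a \<Rightarrow> 'a) \<Rightarrow> ('a \<Rightarrow> 'a) \<Rightarrow> bool" where
  "prederivation sc br P \<longleftrightarrow>
     Vector_Spaces.linear sc sc P \<and>
     (\<forall>x y z. P (br x (br y z)) = br (P x) (br y z) + br x (br (P y) z) + br x (br y (P z)))"

definition periodic_of_order :: "('a \<Rightarrow> 'a) \<Rightarrow> nat \<Rightarrow> bool" where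
  "periodic_of_order P m \<longleftrightarrow> m \<ge> 1 \<and> (P ^^ m) = id \<and> (\<forall>k. 1 \<le> k \<and> k < m \<longrightarrow> (P ^^ k) \<noteq> id)"

end

theory Submission
  imports Defs
begin

text \<open>If \<open>P\<^sup>m = id\<close>, averaging \<open>\<zeta>\<^sup>-\<^sup>k P\<^sup>k\<close> over \<open>k < m\<close> projects onto the \<open>\<zeta>\<close>-eigenspace, so
every element is a sum of eigenvectors with \<open>m\<close>-th roots of unity as eigenvalues (no finite
dimensionality is needed). For a prederivation, \<open>[u,[v,w]]\<close> of eigenvectors with eigenvalues
\<open>\<alpha>, \<beta>, \<gamma>\<close> is an eigenvector with eigenvalue \<open>\<alpha> + \<beta> + \<gamma>\<close>. When \<open>m\<close> is odd this sum is never
an \<open>m\<close>-th root of unity: four unit vectors \<open>\<alpha>, \<beta>, \<gamma>, \<alpha> + \<beta> + \<gamma>\<close> force a pair \<open>\<alpha> = -\<beta>\<close>, etc., and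
\<open>-1\<close> is not an odd-order root of unity. Hence all triple brackets vanish. Conversely, if they
vanish the identity is a prederivation of order 1.\<close>

lemma opposite_pair_if_unit_sum3:
  fixes a b c :: complex
  assumes "norm a = 1" "norm b = 1" "norm c = 1" "norm (a + b + c) = 1"
  shows "b = - a \<or> c = - b \<or> a = - c"
proof -
  have conj_inverse: "z * cnj z = 1" if "norm z = 1" for z :: complex
    using complex_norm_square[of z] that by simp
  \<comment> \<open>\<open>(a + b)(b + c)(c + a) = (a + b + c)(ab + bc + ca) - abc\<close>\<close>
  have "(cnj a + cnj b + cnj c) * (a * b * c)
        = b * c * (a * cnj a) + c * a * (b * cnj b) + a * b * (c * cnj c)"
    by (simp add: algebra_simps)
  then have "(cnj a + cnj b + cnj c) * (a * b * c) = a * b + b * c + c * a"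
    using conj_inverse assms by (simp add: algebra_simps)
  then have "(a + b + c) * (a * b + b * c + c * a)
             = (a + b + c) * (cnj a + cnj b + cnj c) * (a * b * c)"
    by (simp only: mult.assoc)
  also have "\<dots> = a * b * c"
    using conj_inverse[OF assms(4)] by simp
  finally have "(a + b + c) * (a * b + b * c + c * a) = a * b * c" .
  then have "(a + b) * (b + c) * (c + a) = 0"
    by algebra
  then show ?thesis
    by (auto simp: add_eq_0_iff)
qed

lemma roots_unity_sum3_not_root_unity:
  fixes a b c :: complex
  assumes "a ^ m = 1" "b ^ m = 1" "c ^ m = 1" "odd m"
  shows "(a + b + c) ^ m \<noteq> 1"
proof
  assume sum_root: "(a + b + c) ^ m = 1"
  have "norm z = 1" if "z ^ m = 1" for z :: complex
  proof -
    have "norm z ^ m = 1 ^ m"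
      using that by (metis norm_one norm_power power_one)
    then show ?thesis
      using power_eq_imp_eq_base[of "norm z" m 1] odd_pos[OF \<open>odd m\<close>] by simp
  qed
  then have "b = - a \<or> c = - b \<or> a = - c"
    using assms sum_root by (intro opposite_pair_if_unit_sum3) auto
  then show False
    using assms by (auto simp: power_minus_odd)
qed

lemma sum_inverse_power_roots_unity:
  assumes "0 < k" "k < m"
  shows "(\<Sum>z | z ^ m = 1. inverse z ^ k) = (0 :: complex)"
proof -
  let ?R = "{z :: complex. z ^ m = 1}"
  let ?S = "\<Sum>z\<in>?R. inverse z ^ k"
  have "finite {z :: complex. z ^ k = 1}" "card {z :: complex. z ^ k = 1} \<le> k"
    by (rule finite_roots_unity card_roots_unity, use assms in simp)+
  then have "\<not> ?R \<subseteq> {z. z ^ k = 1}"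
    using card_mono[of "{z. z ^ k = 1}" ?R] card_roots_unity_eq[of m] assms by auto
  then obtain \<eta> where "\<eta> \<in> ?R - {z. z ^ k = 1}"
    by blast
  then have \<eta>: "\<eta> ^ m = 1" "\<eta> ^ k \<noteq> 1"
    by simp_all
  then have "\<eta> \<noteq> 0"
    using assms by (auto simp: power_0_left)
  \<comment> \<open>Rotating by the root \<open>\<eta>\<close> permutes the roots of unity but rescales the sum.\<close>
  have "bij_betw ((*) \<eta>) ?R ?R"
    by (rule bij_betw_byWitness[where f' = "\<lambda>z. z / \<eta>"])
       (use \<eta> \<open>\<eta> \<noteq> 0\<close> in \<open>auto simp: power_mult_distrib power_divide\<close>)
  then have "?S = (\<Sum>z\<in>?R. inverse (\<eta> * z) ^ k)"
    by (rule sum.reindex_bij_betw[symmetric])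
  also have "\<dots> = inverse \<eta> ^ k * ?S"
    by (simp add: sum_distrib_left power_mult_distrib)
  finally have "(1 - inverse \<eta> ^ k) * ?S = 0"
    by (simp add: algebra_simps)
  moreover have "inverse \<eta> ^ k \<noteq> 1"
    using \<eta>(2) by (simp add: power_inverse)
  ultimately show ?thesis
    by simp
qed

lemma linear_map_scale: "Vector_Spaces.linear s1 s2 f \<Longrightarrow> f (s1 c x) = s2 c (f x)"
  by (simp add: Vector_Spaces.linear_iff)

lemma linear_map_sum: "Vector_Spaces.linear s1 s2 f \<Longrightarrow> f (sum g A) = (\<Sum>a\<in>A. f (g a))"
  by (simp add: module_hom.sum module_hom_iff_linear[symmetric])

context vector_space
begin

lemma iterate_eigenvector:
  assumes "Vector_Spaces.linear scale scale P" "P v = scale c v"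
  shows "(P ^^ k) v = scale (c ^ k) v"
  by (induction k) (simp_all add: assms linear_map_scale[OF assms(1)] mult.commute)

lemma eigenvector_of_periodic_map_eq_0:
  assumes "Vector_Spaces.linear scale scale P" "P ^^ m = id" "P v = scale c v" "c ^ m \<noteq> 1"
  shows "v = 0"
proof -
  have "v = scale (c ^ m) v"
    using iterate_eigenvector[OF assms(1,3), of m] assms(2) by simp
  then have "scale (c ^ m - 1) v = 0"
    by (simp add: scale_left_diff_distrib)
  then show ?thesis
    using assms(4) by simp
qed

end

lemma periodic_map_eigen_decomposition:
  fixes sc :: "complex \<Rightarrow> 'a::ab_group_add \<Rightarrow> 'a"
  assumes "vector_space sc" and P: "Vector_Spaces.linear sc sc P" and "P ^^ m = id" "0 < m"
  obtains e where "x = (\<Sum>\<zeta> | \<zeta> ^ m = 1. e \<zeta>)" and "\<And>\<zeta>. \<zeta> ^ m = 1 \<Longrightarrow> P (e \<zeta>) = sc \<zeta> (e \<zeta>)"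
proof -
  interpret vector_space sc by fact
  let ?R = "{\<zeta> :: complex. \<zeta> ^ m = 1}"
  define e where "e \<zeta> = sc (1 / of_nat m) (\<Sum>k<m. sc (inverse \<zeta> ^ k) ((P ^^ k) x))" for \<zeta>
  have "P (e \<zeta>) = sc \<zeta> (e \<zeta>)" if "\<zeta> ^ m = 1" for \<zeta>
  proof -
    define g where "g k = sc (inverse \<zeta> ^ k) ((P ^^ k) x)" for k
    have "\<zeta> \<noteq> 0"
      using that \<open>0 < m\<close> by (auto simp: power_0_left)
    then have shift: "sc (inverse \<zeta> ^ k) ((P ^^ Suc k) x) = sc \<zeta> (g (Suc k))" for k
      by (simp add: g_def field_simps)
    have "g m = g 0"
      using that \<open>P ^^ m = id\<close> by (simp add: g_def power_inverse)
    then have periodic: "(\<Sum>k<m. g (Suc k)) = (\<Sum>k<m. g k)"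
      using sum.lessThan_Suc_shift[of g m] by (simp add: algebra_simps)
    have "P (e \<zeta>) = sc (1 / of_nat m) (\<Sum>k<m. sc \<zeta> (g (Suc k)))"
      by (simp add: e_def linear_map_scale[OF P] linear_map_sum[OF P] flip: shift)
    also have "\<dots> = sc (1 / of_nat m) (sc \<zeta> (\<Sum>k<m. g k))"
      by (simp only: periodic flip: scale_sum_right)
    also have "\<dots> = sc \<zeta> (e \<zeta>)"
      by (simp add: e_def g_def mult.commute)
    finally show ?thesis .
  qed
  moreover have "(\<Sum>\<zeta>\<in>?R. e \<zeta>) = x"
  proof -
    have "(\<Sum>\<zeta>\<in>?R. \<Sum>k<m. sc (inverse \<zeta> ^ k) ((P ^^ k) x))
          = (\<Sum>k<m. sc (\<Sum>\<zeta>\<in>?R. inverse \<zeta> ^ k) ((P ^^ k) x))"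
      by (simp add: scale_sum_left sum.swap[of _ ?R])
    also have "\<dots> = (\<Sum>k<m. if k = 0 then sc (of_nat m) x else 0)"
      using card_roots_unity_eq[OF \<open>0 < m\<close>]
      by (intro sum.cong refl) (simp add: sum_inverse_power_roots_unity)
    also have "\<dots> = sc (of_nat m) x"
      using \<open>0 < m\<close> by simp
    finally show ?thesis
      using \<open>0 < m\<close> by (simp add: e_def flip: scale_sum_right)
  qed
  ultimately show ?thesis
    using that by metis
qed

lemma prederivation_triple_bracket_eigenvector:
  assumes "vector_space sc" "prederivation sc br P"
    and "\<And>x. Vector_Spaces.linear sc sc (br x)" "\<And>y. Vector_Spaces.linear sc sc (\<lambda>x. br x y)"
    and "P u = sc a u" "P v = sc b v" "P w = sc c w"
  shows "P (br u (br v w)) = sc (a + b + c) (br u (br v w))"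
proof -
  interpret vector_space sc by fact
  have "P (br u (br v w)) = br (sc a u) (br v w) + br u (br (sc b v) w) + br u (br v (sc c w))"
    using assms(2,5-7) by (simp add: prederivation_def)
  also have "\<dots> = sc (a + b + c) (br u (br v w))"
    by (simp add: linear_map_scale[OF assms(3)] linear_map_scale[OF assms(4)] scale_left_distrib)
  finally show ?thesis .
qed

lemma triple_bracket_eq_0_if_odd_periodic_prederivation:
  fixes sc :: "complex \<Rightarrow> 'a::ab_group_add \<Rightarrow> 'a"
  assumes vs: "vector_space sc" and P: "prederivation sc br P" and "P ^^ m = id" "odd m"
    and left: "\<And>x. Vector_Spaces.linear sc sc (br x)"
    and right: "\<And>y. Vector_Spaces.linear sc sc (\<lambda>x. br x y)"
  shows "br x (br y z) = 0"
proof -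
  let ?R = "{\<zeta> :: complex. \<zeta> ^ m = 1}"
  have P_linear: "Vector_Spaces.linear sc sc P"
    using P by (simp add: prederivation_def)
  note decompose = periodic_map_eigen_decomposition[OF vs P_linear \<open>P ^^ m = id\<close> odd_pos[OF \<open>odd m\<close>]]
  obtain ex where ex: "x = (\<Sum>\<zeta>\<in>?R. ex \<zeta>)" "\<And>\<zeta>. \<zeta> \<in> ?R \<Longrightarrow> P (ex \<zeta>) = sc \<zeta> (ex \<zeta>)"
    using decompose[of x] by auto
  obtain ey where ey: "y = (\<Sum>\<zeta>\<in>?R. ey \<zeta>)" "\<And>\<zeta>. \<zeta> \<in> ?R \<Longrightarrow> P (ey \<zeta>) = sc \<zeta> (ey \<zeta>)"
    using decompose[of y] by auto
  obtain ez where ez: "z = (\<Sum>\<zeta>\<in>?R. ez \<zeta>)" "\<And>\<zeta>. \<zeta> \<in> ?R \<Longrightarrow> P (ez \<zeta>) = sc \<zeta> (ez \<zeta>)"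
    using decompose[of z] by auto
  \<comment> \<open>The bracket of eigenvectors is an eigenvector for the sum of their eigenvalues, which for odd \<open>m\<close> is never an \<open>m\<close>-th root of unity.\<close>
  have "br (ex \<alpha>) (br (ey \<beta>) (ez \<gamma>)) = 0" if "\<alpha> \<in> ?R" "\<beta> \<in> ?R" "\<gamma> \<in> ?R" for \<alpha> \<beta> \<gamma>
    using vector_space.eigenvector_of_periodic_map_eq_0[OF vs P_linear \<open>P ^^ m = id\<close>
        prederivation_triple_bracket_eigenvector[OF vs P left right ex(2) ey(2) ez(2)]]
      roots_unity_sum3_not_root_unity \<open>odd m\<close> that by simp
  then show ?thesis
    by (simp add: ex(1) ey(1) ez(1) linear_map_sum[OF left] linear_map_sum[OF right])
qed

theorem proposition5p5:
  fixes sc :: "complex \<Rightarrow> 'a::ab_group_add \<Rightarrow> 'a"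
    and br :: "'a \<Rightarrow> 'a \<Rightarrow> 'a"
    and B :: "'a set"
  assumes "lie_algebra sc br"
    and "finite_dimensional_vector_space sc B"
  shows "(\<exists>P m. prederivation sc br P \<and> periodic_of_order P m \<and> odd m)
         \<longleftrightarrow> (\<forall>x y z. br x (br y z) = 0)"
proof
  assume "\<exists>P m. prederivation sc br P \<and> periodic_of_order P m \<and> odd m"
  then obtain P m where "prederivation sc br P" "P ^^ m = id" "odd m"
    unfolding periodic_of_order_def by blast
  with assms(1) show "\<forall>x y z. br x (br y z) = 0"
    unfolding lie_algebra_def by (blast intro: triple_bracket_eq_0_if_odd_periodic_prederivation)
next
  assume "\<forall>x y z. br x (br y z) = 0"
  moreover have "vector_space sc"
    using assms(1) by (simp add: lie_algebra_def)
  ultimately have "prederivation sc br id"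
    by (simp add: prederivation_def vector_space.linear_id)
  moreover have "periodic_of_order (id :: 'a \<Rightarrow> 'a) 1"
    by (simp add: periodic_of_order_def)
  ultimately show "\<exists>P m. prederivation sc br P \<and> periodic_of_order P m \<and> odd m"
    by fastforce
qed

end
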